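(* Let $\mathcal{A}$ be a pOC with state set $Q$ and let $p,q\in Q$ be such that $[p{\downarrow}q]>0$ and $\mathrm{Pre}^*(q(0))\cap\mathrm{Post}^*(p(1))$ is finite. Then $$E(p{\downarrow}q)\le\frac{15|Q|^3}{x_{\min}^{4|Q|^3}}.$$
   Context: A pOC is $\mathcal{A}=(Q,\delta^{=0},\delta^{>0},P^{=0},P^{>0})$ with the following components. - $\delta^{>0}\subseteq Q\times\{-1,0,1\}\times Q$ are the positive rules and $\delta^{=0}\subseteq Q\times\{0,1\}\times Q$ are the zero rules. Every state has both kinds of outgoing rule. - $P^{>0}$ and $P^{=0}$ are positive rational probability distributions over the outgoing rules of each state. $\mathcal{M}_\mathcal{A}$ is the Markov chain on configurations $p(i)$ with the following transitions: - $p(0)\to q(c)$ with probability $P^{=0}(p,c,q)$; - for $i\ge1$, $p(i)\to q(i+c)$ with probability $P^{>0}(p,c,q)$. $\mathrm{Pre}^*(C)$ and $\mathrm{Post}^*(C)$ are the sets of configurations from which $C$ is reachable, respectively which are reachable from $C$. $\mathrm{Run}(p{\downarrow}q)$ is the set of runs from $p(1)$ that visit $q(0)$ with the counter positive before that visit. $[p{\downarrow}q]$ is its probability, and $E(p{\downarrow}q)$ is the conditional expected number of transitions until the first visit of $q(0)$ given $\mathrm{Run}(p{\downarrow}q)$. $x_{\min}$ is the least positive probability used in the rules of $\mathcal{A}$. *)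

theory Defs
  imports Complex_Main
begin

text \<open>P0 r c s is the probability of the zero
rule (r,c,s), Pp r c s that of the positive rule (r,c,s); a rule is present
(belongs to delta) iff its probability is positive.\<close>

definition pOC :: "('q::finite \<Rightarrow> int \<Rightarrow> 'q \<Rightarrow> real) \<Rightarrow> ('q \<Rightarrow> int \<Rightarrow> 'q \<Rightarrow> real) \<Rightarrow> bool" where
  "pOC P0 Pp \<longleftrightarrow>
     (\<forall>r c s. P0 r c s \<ge> 0 \<and> Pp r c s \<ge> 0) \<and>
     (\<forall>r c s. P0 r c s \<noteq> 0 \<longrightarrow> c \<in> {0, 1}) \<and>
     (\<forall>r c s. Pp r c s \<noteq> 0 \<longrightarrow> c \<in> {-1, 0, 1}) \<and>
     (\<forall>r c s. P0 r c s \<in> \<rat> \<and> Pp r c s \<in> \<rat>) \<and>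
     (\<forall>r. (\<Sum>c\<in>{0, 1}. \<Sum>s\<in>UNIV. P0 r c s) = 1) \<and>
     (\<forall>r. (\<Sum>c\<in>{-1, 0, 1}. \<Sum>s\<in>UNIV. Pp r c s) = 1)"

definition step :: "('q \<Rightarrow> int \<Rightarrow> 'q \<Rightarrow> real) \<Rightarrow> ('q \<Rightarrow> int \<Rightarrow> 'q \<Rightarrow> real) \<Rightarrow> (('q \<times> int) \<times> ('q \<times> int)) set" where
  "step P0 Pp = {((r, i), (s, j)). (i = 0 \<and> P0 r (j - i) s > 0) \<or> (i > 0 \<and> Pp r (j - i) s > 0)}"

definition Pre_star where
  "Pre_star P0 Pp C = {c. \<exists>d\<in>C. (c, d) \<in> (step P0 Pp)\<^sup>*}"

definition Post_star where
  "Post_star P0 Pp C = {d. \<exists>c\<in>C. (c, d) \<in> (step P0 Pp)\<^sup>*}"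

text \<open>taboo P0 Pp n c d: probability that the chain started in c is in d after exactly
n transitions, the counter being positive in all configurations before step n.\<close>

fun taboo :: "('q::finite \<Rightarrow> int \<Rightarrow> 'q \<Rightarrow> real) \<Rightarrow> ('q \<Rightarrow> int \<Rightarrow> 'q \<Rightarrow> real) \<Rightarrow> nat \<Rightarrow> ('q \<times> int) \<Rightarrow> ('q \<times> int) \<Rightarrow> real" where
  "taboo P0 Pp 0 c d = (if c = d then 1 else 0)"
| "taboo P0 Pp (Suc n) (r, i) d =
     (if i > 0 then (\<Sum>s\<in>UNIV. \<Sum>k\<in>{-1, 0, 1}. Pp r k s * taboo P0 Pp n (s, i + k) d) else 0)"

text \<open>[p down q]: probability of Run(p down q) (disjoint union over the time of the first
visit of q(0)).\<close>

definition pdown :: "('q::finite \<Rightarrow> int \<Rightarrow> 'q \<Rightarrow> real) \<Rightarrow> ('q \<Rightarrow> int \<Rightarrow> 'q \<Rightarrow> real) \<Rightarrow> 'q \<Rightarrow> 'q \<Rightarrow> real" where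
  "pdown P0 Pp p q = (\<Sum>n. taboo P0 Pp n (p, 1) (q, 0))"

text \<open>E(p down q): conditional expected number of transitions until the first visit of q(0)
given Run(p down q) (meaningful when the series below converges).\<close>

definition Edown :: "('q::finite \<Rightarrow> int \<Rightarrow> 'q \<Rightarrow> real) \<Rightarrow> ('q \<Rightarrow> int \<Rightarrow> 'q \<Rightarrow> real) \<Rightarrow> 'q \<Rightarrow> 'q \<Rightarrow> real" where
  "Edown P0 Pp p q = (\<Sum>n. real n * taboo P0 Pp n (p, 1) (q, 0)) / pdown P0 Pp p q"

definition xmin :: "('q::finite \<Rightarrow> int \<Rightarrow> 'q \<Rightarrow> real) \<Rightarrow> ('q \<Rightarrow> int \<Rightarrow> 'q \<Rightarrow> real) \<Rightarrow> real" where
  "xmin P0 Pp = Min ({P0 r c s | r c s. P0 r c s > 0} \<union> {Pp r c s | r c s. Pp r c s > 0})"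

end

theory Submission
  imports Defs
begin

text \<open>
Let R be the set of configurations with positive counter that lie on a positive path from p(1)
to q(0).  R is contained in the finite set Pre*(q(0)) \<inter> Post*(p(1)), and it is small: its
counters are at most |Q|^2, because above that height one finds two levels a < b that the ascent
from p(1) and the descent to q(0) cross in the same pair of states; the loops between these levels
can then be pumped, producing infinitely many configurations of Pre*(q(0)) \<inter> Post*(p(1)).
Hence |R| \<le> |Q|^3.  From every configuration of R, q(0) is reached by a path of length at most
|R|, hence with probability at least y = x_min^|R| within |R| steps.  So the probability of
staying in R for n steps is at most (1 - y)^(n div |R|), which bounds the unnormalised expected
time by |R| / y; dividing by [p\<down>q] \<ge> y gives the bound.
\<close>

lemma rtrancl_level_witnesses:
  fixes S :: "(('q \<times> int) \<times> ('q \<times> int)) set"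
  assumes "(x, y) \<in> S\<^sup>*"
    and up_bound: "\<And>a b. (a, b) \<in> S \<Longrightarrow> snd b \<le> snd a + 1"
  shows "\<exists>u. u (snd y) = fst y \<and>
    (\<forall>l. snd x \<le> l \<and> l \<le> snd y \<longrightarrow> (x, (u l, l)) \<in> S\<^sup>*) \<and>
    (\<forall>l l'. snd x \<le> l \<and> l \<le> l' \<and> l' \<le> snd y \<longrightarrow> ((u l, l), (u l', l')) \<in> S\<^sup>*)"
  using assms(1)
proof (induction rule: rtrancl_induct)
  case base
  show ?case by (intro exI[where x="\<lambda>_. fst x"]) (auto intro: rtrancl_eq_or_trancl[THEN iffD2])
next
  case (step y z)
  \<comment> \<open>u l is the last configuration at level l seen so far; z replaces it at its own level.\<close>
  obtain u where u_y: "u (snd y) = fst y"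
    and from_x: "\<forall>l. snd x \<le> l \<and> l \<le> snd y \<longrightarrow> (x, (u l, l)) \<in> S\<^sup>*"
    and ordered: "\<forall>l l'. snd x \<le> l \<and> l \<le> l' \<and> l' \<le> snd y \<longrightarrow> ((u l, l), (u l', l')) \<in> S\<^sup>*"
    using step.IH by blast
  have z_le: "snd z \<le> snd y + 1" using up_bound[OF step.hyps(2)] .
  have y_eq: "y = (u (snd y), snd y)" using u_y by simp
  define u' where "u' = u(snd z := fst z)"
  have "(x, (u' l, l)) \<in> S\<^sup>*" if "snd x \<le> l" "l \<le> snd z" for l
  proof (cases "l = snd z")
    case True then show ?thesis using step.hyps by (simp add: u'_def)
  next
    case False then show ?thesis using from_x that z_le by (simp add: u'_def)
  qed
  moreover have "((u' l, l), (u' l', l')) \<in> S\<^sup>*"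
    if "snd x \<le> l" "l \<le> l'" "l' \<le> snd z" for l l'
  proof (cases "l' = snd z")
    case True
    show ?thesis
    proof (cases "l = snd z")
      case False
      then have "l \<le> snd y" using that z_le True by simp
      then have "((u l, l), y) \<in> S\<^sup>*" using ordered that(1) y_eq by (metis order_refl)
      then have "((u l, l), z) \<in> S\<^sup>*" using step.hyps(2) by (rule rtrancl_into_rtrancl)
      then show ?thesis using True False by (simp add: u'_def)
    qed (use True in simp)
  next
    case False then show ?thesis using ordered that z_le by (simp add: u'_def)
  qed
  ultimately show ?case by (intro exI[where x=u']) (auto simp: u'_def)
qed

lemma rtrancl_restrict_sources_last_exit:
  assumes "(x, y) \<in> (S \<inter> B \<times> UNIV)\<^sup>*"
  shows "(x, y) \<in> (S \<inter> (B - {a}) \<times> UNIV)\<^sup>* \<or> (\<exists>z. (a, z) \<in> S \<and> (z, y) \<in> (S \<inter> (B - {a}) \<times> UNIV)\<^sup>*)"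
  using assms
proof (induction rule: converse_rtrancl_induct)
  case (step x z)
  then show ?case by (cases "x = a") (auto intro: converse_rtrancl_into_rtrancl)
qed simp

lemma rtrancl_restrict_sources_relpow_le_card:
  assumes "finite A" and "(x, y) \<in> (S \<inter> A \<times> UNIV)\<^sup>*"
  shows "\<exists>k \<le> card A. (x, y) \<in> S ^^ k"
  using assms
proof (induction A arbitrary: x rule: finite_remove_induct)
  case empty
  then show ?case by (auto elim: converse_rtranclE)
next
  case (remove A)
  show ?case
  proof (cases "x \<in> A \<and> x \<noteq> y")
    case False
    then have "x = y" using remove.prems by (auto elim: converse_rtranclE)
    then show ?thesis by auto
  next
    case True
    then have "(x, y) \<notin> (S \<inter> (A - {x}) \<times> UNIV)\<^sup>*" by (auto elim: converse_rtranclE)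
    then obtain z where "(x, z) \<in> S" and "(z, y) \<in> (S \<inter> (A - {x}) \<times> UNIV)\<^sup>*"
      using rtrancl_restrict_sources_last_exit[OF remove.prems] by blast
    moreover obtain k where "k \<le> card (A - {x})" and "(z, y) \<in> S ^^ k"
      using remove.IH[OF _ calculation(2)] True by blast
    ultimately have "(x, y) \<in> S ^^ Suc k" by (blast intro: relpow_Suc_I2)
    moreover have "Suc k \<le> card A"
      using \<open>k \<le> card (A - {x})\<close> True remove.hyps(1) card_gt_0_iff[of A]
      by (auto simp: card_Diff_singleton)
    ultimately show ?thesis by blast
  qed
qed

lemma sum_of_nat_mult_eq_sum_tails:
  fixes f :: "nat \<Rightarrow> 'a::comm_semiring_1"
  shows "(\<Sum>n<N. of_nat n * f n) = (\<Sum>j<N. \<Sum>k<N - Suc j. f (Suc (j + k)))"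
proof (induction N)
  case (Suc N)
  have "(\<Sum>k<Suc N - Suc j. f (Suc (j + k))) = (\<Sum>k<N - Suc j. f (Suc (j + k))) + f N"
    if "j < N" for j
  proof -
    have "Suc N - Suc j = Suc (N - Suc j)" and "Suc (j + (N - Suc j)) = N" using that by simp_all
    then show ?thesis by simp
  qed
  then have "(\<Sum>j<Suc N. \<Sum>k<Suc N - Suc j. f (Suc (j + k)))
      = (\<Sum>j<N. \<Sum>k<N - Suc j. f (Suc (j + k))) + of_nat N * f N"
    by (simp add: sum.distrib)
  then show ?case using Suc.IH by simp
qed simp

lemma sum_power_div_le:
  fixes x :: real
  assumes "0 \<le> x" "x < 1" "0 < m"
  shows "(\<Sum>j<N. x ^ (j div m)) \<le> m / (1 - x)"
proof -
  have blocks: "(\<Sum>j<K * m. x ^ (j div m)) = m * (\<Sum>i<K. x ^ i)" for K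
  proof -
    have "(\<Sum>j\<in>{i * m..<i * m + m}. x ^ (j div m)) = m * x ^ i" for i
    proof -
      have "j div m = i" if "j \<in> {i * m..<i * m + m}" for j
        using that assms(3) by (auto intro: div_nat_eqI simp: mult.commute)
      then show ?thesis by simp
    qed
    then show ?thesis by (simp add: sum.nat_group[symmetric] sum_distrib_left)
  qed
  have "(\<Sum>j<N. x ^ (j div m)) \<le> (\<Sum>j<N * m. x ^ (j div m))"
    using assms by (intro sum_mono2) auto
  also have "\<dots> = m * ((1 - x ^ N) / (1 - x))"
    using assms by (simp add: blocks sum_gp_strict)
  also have "\<dots> \<le> m / (1 - x)"
    using assms by (simp add: field_simps mult_left_le_one_le)
  finally show ?thesis .
qed

text \<open>A constant rather than the literal set, so that the simplifier does not split the sums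
over counter changes in the recursion for taboo.\<close>

definition counter_moves :: "int set" where
  "counter_moves = {-1, 0, 1}"

lemma taboo_Suc_conf:
  "taboo P0 Pp (Suc n) c d =
   (if snd c > 0
    then (\<Sum>s\<in>UNIV. \<Sum>k\<in>counter_moves. Pp (fst c) k s * taboo P0 Pp n (s, snd c + k) d) else 0)"
  by (cases c) (simp add: counter_moves_def)

declare taboo.simps(2)[simp del]

text \<open>The moves a run in Run(p\<down>q) can make before it reaches q(0).\<close>

definition pos_step :: "('q \<Rightarrow> int \<Rightarrow> 'q \<Rightarrow> real) \<Rightarrow> (('q \<times> int) \<times> ('q \<times> int)) set" where
  "pos_step Pp = {((r, i), (s, j)). i > 0 \<and> Pp r (j - i) s > 0}"

lemma pos_step_iff: "(x, y) \<in> pos_step Pp \<longleftrightarrow> snd x > 0 \<and> Pp (fst x) (snd y - snd x) (fst y) > 0"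
  by (cases x; cases y) (simp add: pos_step_def)

lemma pos_step_subset_step: "pos_step Pp \<subseteq> step P0 Pp"
  by (auto simp: pos_step_def step_def)

lemma pos_step_rtrancl_shift:
  assumes "(x, y) \<in> (pos_step Pp)\<^sup>*" and "0 \<le> d"
  shows "((fst x, snd x + d), (fst y, snd y + d)) \<in> (pos_step Pp)\<^sup>*"
  using assms(1)
proof (induction rule: rtrancl_induct)
  case (step y z)
  then have "((fst y, snd y + d), (fst z, snd z + d)) \<in> pos_step Pp"
    using assms(2) by (simp add: pos_step_iff)
  with step.IH show ?case by (rule rtrancl_into_rtrancl)
qed simp

lemma sum_swap_moves:
  fixes Pp :: "'q::finite \<Rightarrow> int \<Rightarrow> 'q \<Rightarrow> real"
  shows "(\<Sum>x\<in>A. \<Sum>s\<in>UNIV. \<Sum>k\<in>counter_moves. Pp r k s * f s k x)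
   = (\<Sum>s\<in>UNIV. \<Sum>k\<in>counter_moves. Pp r k s * (\<Sum>x\<in>A. f s k x))"
proof -
  have "(\<Sum>x\<in>A. \<Sum>s\<in>UNIV. \<Sum>k\<in>counter_moves. Pp r k s * f s k x)
      = (\<Sum>s\<in>UNIV. \<Sum>k\<in>counter_moves. \<Sum>x\<in>A. Pp r k s * f s k x)"
    by (subst sum.swap) (rule sum.cong[OF refl], rule sum.swap)
  also have "\<dots> = (\<Sum>s\<in>UNIV. \<Sum>k\<in>counter_moves. Pp r k s * (\<Sum>x\<in>A. f s k x))"
    by (simp add: sum_distrib_left)
  finally show ?thesis .
qed

locale poc =
  fixes P0 Pp :: "'q::finite \<Rightarrow> int \<Rightarrow> 'q \<Rightarrow> real"
  assumes poc: "pOC P0 Pp"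
begin

abbreviation "tab \<equiv> taboo P0 Pp"
abbreviation "P \<equiv> pos_step Pp"
abbreviation "xm \<equiv> xmin P0 Pp"

lemma Pp_nonneg: "Pp r k s \<ge> 0"
  using poc by (simp add: pOC_def)

lemma Pp_eq_0_if_not_move: "k \<notin> counter_moves \<Longrightarrow> Pp r k s = 0"
  using poc unfolding pOC_def counter_moves_def by blast

lemma Pp_sum_eq_1: "(\<Sum>s\<in>UNIV. \<Sum>k\<in>counter_moves. Pp r k s) = 1"
proof -
  have "(\<Sum>k\<in>counter_moves. \<Sum>s\<in>UNIV. Pp r k s) = 1"
    using poc by (simp add: pOC_def counter_moves_def)
  then show ?thesis by (subst sum.swap)
qed

lemma Pp_le_1: "Pp r k s \<le> 1"
proof (cases "k \<in> counter_moves")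
  case True
  have "Pp r k s \<le> (\<Sum>k\<in>counter_moves. Pp r k s)"
    using True by (intro member_le_sum) (auto simp: Pp_nonneg counter_moves_def)
  also have "\<dots> \<le> (\<Sum>s\<in>UNIV. \<Sum>k\<in>counter_moves. Pp r k s)"
    by (intro member_le_sum) (auto simp: Pp_nonneg sum_nonneg)
  finally show ?thesis using Pp_sum_eq_1 by simp
qed (simp add: Pp_eq_0_if_not_move)

lemma ex_Pp_pos: "\<exists>r k s. Pp r k s > 0"
proof -
  obtain r :: 'q where True by simp
  have "(\<Sum>s\<in>UNIV. \<Sum>k\<in>counter_moves. Pp r k s) \<noteq> 0" using Pp_sum_eq_1 by simp
  then obtain s k where "Pp r k s \<noteq> 0" by (meson sum.not_neutral_contains_not_neutral)
  then show ?thesis using Pp_nonneg[of r k s] by (auto simp: less_le)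
qed

lemma finite_positive_probabilities:
  "finite ({P0 r c s | r c s. P0 r c s > 0} \<union> {Pp r c s | r c s. Pp r c s > 0})"
proof -
  have "{P0 r c s | r c s. P0 r c s > 0} \<subseteq> (\<lambda>(r, c, s). P0 r c s) ` (UNIV \<times> {0, 1} \<times> UNIV)"
  proof
    fix x assume "x \<in> {P0 r c s | r c s. P0 r c s > 0}"
    then obtain r c s where "x = P0 r c s" "P0 r c s > 0" by blast
    moreover have "\<forall>r c s. P0 r c s \<noteq> 0 \<longrightarrow> c \<in> {0, 1}" using poc unfolding pOC_def by blast
    then have "c \<in> {0, 1}" using \<open>P0 r c s > 0\<close> by (metis less_irrefl)
    ultimately show "x \<in> (\<lambda>(r, c, s). P0 r c s) ` (UNIV \<times> {0, 1} \<times> UNIV)"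
      by (intro image_eqI[where x="(r, c, s)"]) auto
  qed
  moreover have "{Pp r c s | r c s. Pp r c s > 0} \<subseteq> (\<lambda>(r, c, s). Pp r c s) ` (UNIV \<times> counter_moves \<times> UNIV)"
  proof
    fix x assume "x \<in> {Pp r c s | r c s. Pp r c s > 0}"
    then obtain r c s where "x = Pp r c s" "Pp r c s > 0" by blast
    moreover have "c \<in> counter_moves" using Pp_eq_0_if_not_move \<open>Pp r c s > 0\<close> by fastforce
    ultimately show "x \<in> (\<lambda>(r, c, s). Pp r c s) ` (UNIV \<times> counter_moves \<times> UNIV)"
      by (intro image_eqI[where x="(r, c, s)"]) auto
  qed
  ultimately show ?thesis
    by (rule finite_subset[OF Un_mono]) (simp add: counter_moves_def)
qed

lemma xmin_le_Pp: "Pp r k s > 0 \<Longrightarrow> xm \<le> Pp r k s"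
  unfolding xmin_def by (rule Min_le[OF finite_positive_probabilities]) blast

lemma xmin_pos: "xm > 0"
proof -
  obtain r k s where "Pp r k s > 0" using ex_Pp_pos by blast
  then have "{P0 r c s | r c s. P0 r c s > 0} \<union> {Pp r c s | r c s. Pp r c s > 0} \<noteq> {}" by blast
  then show ?thesis unfolding xmin_def using Min_in[OF finite_positive_probabilities] by auto
qed

lemma xmin_le_1: "xm \<le> 1"
  using ex_Pp_pos xmin_le_Pp Pp_le_1 order_trans by blast

lemma taboo_nonneg: "tab n c d \<ge> 0"
  by (induction n arbitrary: c) (simp_all add: taboo_Suc_conf sum_nonneg Pp_nonneg)

lemma taboo_Suc_nonpos: "snd c \<le> 0 \<Longrightarrow> tab (Suc n) c d = 0"
  by (simp add: taboo_Suc_conf)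

lemma pos_step_counter_bounds: "(x, y) \<in> P \<Longrightarrow> snd x - 1 \<le> snd y \<and> snd y \<le> snd x + 1"
  using Pp_eq_0_if_not_move[of "snd y - snd x"] by (force simp: pos_step_iff counter_moves_def)

lemma taboo_nonzero_imp_relpow: "tab n c d \<noteq> 0 \<Longrightarrow> (c, d) \<in> P ^^ n"
proof (induction n arbitrary: c)
  case (Suc n)
  then have pos: "snd c > 0"
    and "(\<Sum>s\<in>UNIV. \<Sum>k\<in>counter_moves. Pp (fst c) k s * tab n (s, snd c + k) d) \<noteq> 0"
    by (auto simp: taboo_Suc_conf split: if_splits)
  then obtain s k where "Pp (fst c) k s * tab n (s, snd c + k) d \<noteq> 0"
    by (meson sum.not_neutral_contains_not_neutral)
  then have "(c, (s, snd c + k)) \<in> P" and "tab n (s, snd c + k) d \<noteq> 0"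
    using pos Pp_nonneg[of "fst c" k s] by (auto simp: pos_step_iff less_le)
  then show ?case using Suc.IH by (blast intro: relpow_Suc_I2)
qed (simp split: if_splits)

lemma taboo_ge_xmin_power: "(c, d) \<in> P ^^ n \<Longrightarrow> xm ^ n \<le> tab n c d"
proof (induction n arbitrary: c)
  case (Suc n)
  then obtain y where cy: "(c, y) \<in> P" and yd: "(y, d) \<in> P ^^ n" by (meson relpow_Suc_E2)
  define k where "k = snd y - snd c"
  have pos: "snd c > 0" and pp: "Pp (fst c) k (fst y) > 0" using cy by (auto simp: pos_step_iff k_def)
  have y_eq: "(fst y, snd c + k) = y" by (simp add: k_def)
  have "xm ^ Suc n \<le> Pp (fst c) k (fst y) * tab n (fst y, snd c + k) d"
    using Suc.IH[OF yd] xmin_le_Pp[OF pp] xmin_pos y_eq by (simp add: mult_mono)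
  also have "\<dots> \<le> (\<Sum>k\<in>counter_moves. Pp (fst c) k (fst y) * tab n (fst y, snd c + k) d)"
    using pp Pp_eq_0_if_not_move[of k "fst c" "fst y"]
    by (intro member_le_sum) (auto simp: Pp_nonneg taboo_nonneg counter_moves_def)
  also have "\<dots> \<le> tab (Suc n) c d"
    unfolding taboo_Suc_conf using pos
    by (simp, intro member_le_sum) (auto simp: Pp_nonneg taboo_nonneg sum_nonneg)
  finally show ?case .
qed simp

lemma taboo_substochastic:
  assumes "finite D" "t \<notin> D" "snd t \<le> 0"
  shows "(\<Sum>d\<in>D. tab n c d) + (\<Sum>k\<le>n. tab k c t) \<le> 1"
proof (induction n arbitrary: c)
  case 0
  show ?case using assms(1,2) by (cases "c \<in> D") (auto simp: sum.delta')
next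
  case (Suc n)
  show ?case
  proof (cases "snd c > 0")
    case False
    then show ?thesis by (simp add: taboo_Suc_nonpos sum.atMost_Suc_shift del: sum.atMost_Suc)
  next
    case True
    then have "c \<noteq> t" using assms(3) by auto
    define X where "X s k = (\<Sum>d\<in>D. tab n (s, snd c + k) d) + (\<Sum>j\<le>n. tab j (s, snd c + k) t)" for s k
    have "(\<Sum>d\<in>D. tab (Suc n) c d) + (\<Sum>k\<le>Suc n. tab k c t)
        = (\<Sum>d\<in>D. tab (Suc n) c d) + (\<Sum>k\<le>n. tab (Suc k) c t)"
      using \<open>c \<noteq> t\<close> by (simp add: sum.atMost_Suc_shift del: sum.atMost_Suc)
    also have "\<dots> = (\<Sum>s\<in>UNIV. \<Sum>k\<in>counter_moves. Pp (fst c) k s * X s k)"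
      using True by (simp add: taboo_Suc_conf X_def distrib_left sum.distrib
          sum_swap_moves[where f="\<lambda>s k d. tab n (s, snd c + k) d"]
          sum_swap_moves[where f="\<lambda>s k j. tab j (s, snd c + k) t"])
    also have "\<dots> \<le> (\<Sum>s\<in>UNIV. \<Sum>k\<in>counter_moves. Pp (fst c) k s)"
      using Suc.IH by (intro sum_mono) (simp add: X_def Pp_nonneg mult_left_le)
    finally show ?thesis by (simp add: Pp_sum_eq_1)
  qed
qed

lemma taboo_add:
  assumes "finite D" and "\<And>d. (c, d) \<in> P ^^ m \<Longrightarrow> (d, e) \<in> P ^^ n \<Longrightarrow> d \<in> D"
  shows "tab (m + n) c e = (\<Sum>d\<in>D. tab m c d * tab n d e)"
  using assms(2)
proof (induction m arbitrary: c)
  case 0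
  have "(\<Sum>d\<in>D. tab 0 c d * tab n d e) = (\<Sum>d\<in>D. if c = d then tab n d e else 0)"
    by (intro sum.cong) auto
  moreover have "c \<notin> D \<Longrightarrow> tab n c e = 0"
    using "0.prems" taboo_nonzero_imp_relpow by fastforce
  ultimately show ?case using assms(1) by (simp add: sum.delta')
next
  case (Suc m)
  show ?case
  proof (cases "snd c > 0")
    case False
    then show ?thesis by (simp add: taboo_Suc_nonpos)
  next
    case True
    have IH: "Pp (fst c) k s * tab (m + n) (s, snd c + k) e
        = Pp (fst c) k s * (\<Sum>d\<in>D. tab m (s, snd c + k) d * tab n d e)" for s k
    proof (cases "Pp (fst c) k s > 0")
      case True
      with \<open>snd c > 0\<close> have "(c, (s, snd c + k)) \<in> P" by (simp add: pos_step_iff)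
      then have "tab (m + n) (s, snd c + k) e = (\<Sum>d\<in>D. tab m (s, snd c + k) d * tab n d e)"
        by (intro Suc.IH Suc.prems relpow_Suc_I2)
      then show ?thesis by simp
    qed (use Pp_nonneg[of "fst c" k s] in simp)
    have "tab (Suc m + n) c e
        = (\<Sum>s\<in>UNIV. \<Sum>k\<in>counter_moves. Pp (fst c) k s * tab (m + n) (s, snd c + k) e)"
      using True by (simp add: taboo_Suc_conf)
    also have "\<dots> = (\<Sum>d\<in>D. \<Sum>s\<in>UNIV. \<Sum>k\<in>counter_moves.
        Pp (fst c) k s * (tab m (s, snd c + k) d * tab n d e))"
      by (simp add: IH sum_swap_moves[where f="\<lambda>s k d. tab m (s, snd c + k) d * tab n d e"])
    also have "\<dots> = (\<Sum>d\<in>D. tab (Suc m) c d * tab n d e)"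
      using True by (simp add: taboo_Suc_conf sum_distrib_right mult.assoc)
    finally show ?thesis .
  qed
qed

lemma pos_step_pump:
  assumes "(x, (s, a)) \<in> P\<^sup>*" "((s, a), (s, b)) \<in> P\<^sup>*" "((s, b), (t, b)) \<in> P\<^sup>*"
    "((t, b), (t, a)) \<in> P\<^sup>*" "((t, a), y) \<in> P\<^sup>*" and "0 \<le> a" "a \<le> b"
  shows "(x, (s, b + int k * (b - a))) \<in> P\<^sup>* \<and> ((s, b + int k * (b - a)), y) \<in> P\<^sup>*"
proof -
  have shift: "b + int k * (b - a) = a + int (Suc k) * (b - a)" for k
    by (simp add: algebra_simps)
  have ascend: "((s, a), (s, a + int k * (b - a))) \<in> P\<^sup>*" for k
  proof (induction k)
    case (Suc k)
    have "((s, a + int k * (b - a)), (s, b + int k * (b - a))) \<in> P\<^sup>*"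
      using pos_step_rtrancl_shift[OF assms(2), of "int k * (b - a)"] assms(6,7) by simp
    with Suc.IH show ?case by (simp add: shift)
  qed simp
  have descend: "((t, a + int k * (b - a)), (t, a)) \<in> P\<^sup>*" for k
  proof (induction k)
    case (Suc k)
    have "((t, b + int k * (b - a)), (t, a + int k * (b - a))) \<in> P\<^sup>*"
      using pos_step_rtrancl_shift[OF assms(4), of "int k * (b - a)"] assms(6,7) by simp
    with Suc.IH show ?case by (simp add: shift)
  qed simp
  have "((s, b + int k * (b - a)), (t, b + int k * (b - a))) \<in> P\<^sup>*"
    using pos_step_rtrancl_shift[OF assms(3), of "int k * (b - a)"] assms(6,7) by simp
  then show ?thesis
    using assms(1,5) ascend[of "Suc k"] descend[of "Suc k"] by (simp add: shift) (meson rtrancl_trans)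
qed

end

locale poc_descent = poc P0 Pp for P0 Pp :: "'q::finite \<Rightarrow> int \<Rightarrow> 'q \<Rightarrow> real" +
  fixes p q :: 'q
  assumes finite_between: "finite (Pre_star P0 Pp {(q, 0)} \<inter> Post_star P0 Pp {(p, 1)})"
begin

definition R :: "('q \<times> int) set" where
  "R = {d. snd d > 0 \<and> ((p, 1), d) \<in> P\<^sup>* \<and> (d, (q, 0)) \<in> P\<^sup>*}"

lemma between_if_pos_paths:
  "((p, 1), d) \<in> P\<^sup>* \<Longrightarrow> (d, (q, 0)) \<in> P\<^sup>* \<Longrightarrow> d \<in> Pre_star P0 Pp {(q, 0)} \<inter> Post_star P0 Pp {(p, 1)}"
  using rtrancl_mono[OF pos_step_subset_step] by (auto simp: Pre_star_def Post_star_def)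

lemma finite_R: "finite R"
  by (rule finite_subset[OF _ finite_between]) (auto simp: R_def dest: between_if_pos_paths)

lemma no_pumpable_loops:
  assumes "((p, 1), (s, a)) \<in> P\<^sup>*" "((s, a), (s, b)) \<in> P\<^sup>*" "((s, b), (t, b)) \<in> P\<^sup>*"
    "((t, b), (t, a)) \<in> P\<^sup>*" "((t, a), (q, 0)) \<in> P\<^sup>*" and "0 \<le> a" "a < b"
  shows False
proof -
  have "range (\<lambda>k. (s, b + int k * (b - a))) \<subseteq> Pre_star P0 Pp {(q, 0)} \<inter> Post_star P0 Pp {(p, 1)}"
    using pos_step_pump[OF assms(1-5)] assms(6,7) between_if_pos_paths by auto
  moreover have "inj (\<lambda>k. (s, b + int k * (b - a)))"
    using assms(7) by (auto simp: inj_def)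
  ultimately show False
    using finite_between by (meson finite_imageD finite_subset infinite_UNIV_nat)
qed

lemma R_height: "d \<in> R \<Longrightarrow> snd d \<le> int (card (UNIV :: 'q set)) ^ 2"
proof (rule ccontr)
  assume "d \<in> R" and "\<not> snd d \<le> int (card (UNIV :: 'q set)) ^ 2"
  moreover have "card (UNIV :: ('q \<times> 'q) set) = card (UNIV :: 'q set) ^ 2"
    by (simp add: card_cartesian_product power2_eq_square flip: UNIV_Times_UNIV)
  ultimately have high: "int (card (UNIV :: ('q \<times> 'q) set)) < snd d"
    and up: "((p, 1), d) \<in> P\<^sup>*" and down: "((q, 0), d) \<in> (P\<inverse>)\<^sup>*"
    by (auto simp: R_def rtrancl_converse)
  have bound: "snd b \<le> snd a + 1" if "(a, b) \<in> P \<or> (b, a) \<in> P" for a b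
    using that pos_step_counter_bounds by fastforce
  obtain u where "u (snd d) = fst d"
    and from_start: "\<forall>l. 1 \<le> l \<and> l \<le> snd d \<longrightarrow> ((p, 1), (u l, l)) \<in> P\<^sup>*"
    and ascent: "\<forall>l l'. 1 \<le> l \<and> l \<le> l' \<and> l' \<le> snd d \<longrightarrow> ((u l, l), (u l', l')) \<in> P\<^sup>*"
    using rtrancl_level_witnesses[OF up] bound by auto
  obtain v where "v (snd d) = fst d"
    and to_target: "\<forall>l. 0 \<le> l \<and> l \<le> snd d \<longrightarrow> ((v l, l), (q, 0)) \<in> P\<^sup>*"
    and descent: "\<forall>l l'. 0 \<le> l \<and> l \<le> l' \<and> l' \<le> snd d \<longrightarrow> ((v l', l'), (v l, l)) \<in> P\<^sup>*"
    using rtrancl_level_witnesses[OF down] bound by (auto simp: rtrancl_converse)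
  then have peak: "d = (u (snd d), snd d)" "d = (v (snd d), snd d)"
    using \<open>u (snd d) = fst d\<close> by simp_all
  have "card ((\<lambda>l. (u l, v l)) ` {1..snd d}) < card {1..snd d}"
    using card_mono[of UNIV "(\<lambda>l. (u l, v l)) ` {1..snd d}"] high by simp
  then have "\<not> inj_on (\<lambda>l. (u l, v l)) {1..snd d}" by (rule pigeonhole)
  then obtain a b where "a \<in> {1..snd d}" "b \<in> {1..snd d}" "a \<noteq> b" "u a = u b" "v a = v b"
    by (auto simp: inj_on_def)
  then obtain a b where ab: "1 \<le> a" "a < b" "b \<le> snd d" "u a = u b" "v a = v b"
    by (metis atLeastAtMost_iff linorder_neq_iff)
  have "((u a, a), (u a, b)) \<in> P\<^sup>*" "((v a, b), (v a, a)) \<in> P\<^sup>*"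
    using ascent[rule_format, of a b] descent[rule_format, of a b] ab by simp_all
  moreover have "((u a, b), d) \<in> P\<^sup>*" "(d, (v a, b)) \<in> P\<^sup>*"
    using ascent[rule_format, of b "snd d"] descent[rule_format, of b "snd d"] ab peak by simp_all
  ultimately show False
    using ab from_start[rule_format, of a] to_target[rule_format, of a]
    by (intro no_pumpable_loops[where s="u a" and t="v a" and a=a and b=b]) (auto intro: rtrancl_trans)
qed

lemma card_R_le: "card R \<le> card (UNIV :: 'q set) ^ 3"
proof -
  have "R \<subseteq> UNIV \<times> {1..int (card (UNIV :: 'q set)) ^ 2}"
    using R_height by (force simp: R_def)
  then have "card R \<le> card (UNIV \<times> {1..int (card (UNIV :: 'q set)) ^ 2} :: ('q \<times> int) set)"
    by (rule card_mono[rotated]) simp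
  also have "\<dots> = card (UNIV :: 'q set) * nat (int (card (UNIV :: 'q set)) ^ 2)"
    by (simp add: card_cartesian_product)
  finally show ?thesis by (simp add: power2_eq_square power3_eq_cube flip: of_nat_mult)
qed

lemma reaches_target_within_card_R:
  assumes "c \<in> R"
  shows "\<exists>k \<le> card R. (c, (q, 0)) \<in> P ^^ k"
proof -
  have inside: "(c, (q, 0)) \<in> (P \<inter> R \<times> UNIV)\<^sup>*"
    if "(c, (q, 0)) \<in> P\<^sup>*" "((p, 1), c) \<in> P\<^sup>*" for c
    using that
  proof (induction rule: converse_rtrancl_induct)
    case (step c z)
    have "(c, (q, 0)) \<in> P\<^sup>*" using step.hyps by (rule converse_rtrancl_into_rtrancl)
    then have "(c, z) \<in> P \<inter> R \<times> UNIV"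
      using step.prems step.hyps(1) by (simp add: R_def pos_step_iff)
    moreover have "(z, (q, 0)) \<in> (P \<inter> R \<times> UNIV)\<^sup>*"
      using rtrancl_into_rtrancl[OF step.prems step.hyps(1)] by (rule step.IH)
    ultimately show ?case by (rule converse_rtrancl_into_rtrancl)
  qed simp
  have "(c, (q, 0)) \<in> P\<^sup>*" "((p, 1), c) \<in> P\<^sup>*" using assms by (simp_all add: R_def)
  then show ?thesis by (rule rtrancl_restrict_sources_relpow_le_card[OF finite_R inside])
qed

lemma taboo_add_through_R:
  assumes "((p, 1), c) \<in> P\<^sup>*" "(e, (q, 0)) \<in> P\<^sup>*" and "0 < n \<or> e \<in> R"
  shows "tab (m + n) c e = (\<Sum>d\<in>R. tab m c d * tab n d e)"
proof (rule taboo_add[OF finite_R])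
  fix d assume "(c, d) \<in> P ^^ m" "(d, e) \<in> P ^^ n"
  moreover have "snd d > 0"
  proof (cases n)
    case 0 then show ?thesis using \<open>(d, e) \<in> P ^^ n\<close> assms(3) by (simp add: R_def)
  next
    case (Suc n')
    then obtain y where "(d, y) \<in> P" using \<open>(d, e) \<in> P ^^ n\<close> by (meson relpow_Suc_E2)
    then show ?thesis by (simp add: pos_step_iff)
  qed
  ultimately show "d \<in> R"
    using assms(1,2) by (auto simp: R_def dest!: relpow_imp_rtrancl intro: rtrancl_trans)
qed

definition survival :: "nat \<Rightarrow> 'q \<times> int \<Rightarrow> real" where
  "survival n c = (\<Sum>d\<in>R. tab n c d)"

lemma survival_nonneg: "survival n c \<ge> 0"
  by (simp add: survival_def sum_nonneg taboo_nonneg)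

lemma survival_plus_hit_le_1: "survival n c + (\<Sum>k\<le>n. tab k c (q, 0)) \<le> 1"
  unfolding survival_def by (rule taboo_substochastic[OF finite_R]) (auto simp: R_def)

lemma survival_le_1: "survival n c \<le> 1"
proof -
  have "0 \<le> (\<Sum>k\<le>n. tab k c (q, 0))" by (simp add: sum_nonneg taboo_nonneg)
  then show ?thesis using survival_plus_hit_le_1[of n c] by linarith
qed

lemma survival_add:
  assumes "c \<in> R"
  shows "survival (m + n) c = (\<Sum>d\<in>R. tab m c d * survival n d)"
proof -
  have "survival (m + n) c = (\<Sum>e\<in>R. \<Sum>d\<in>R. tab m c d * tab n d e)"
    unfolding survival_def using assms by (intro sum.cong refl taboo_add_through_R) (auto simp: R_def)
  also have "\<dots> = (\<Sum>d\<in>R. tab m c d * survival n d)"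
    by (subst sum.swap) (simp add: survival_def sum_distrib_left)
  finally show ?thesis .
qed

lemma xmin_power_le_hit:
  assumes "c \<in> R"
  shows "xm ^ card R \<le> (\<Sum>k\<le>card R. tab k c (q, 0))"
proof -
  obtain k where k: "k \<le> card R" "(c, (q, 0)) \<in> P ^^ k"
    using reaches_target_within_card_R[OF assms] by blast
  have "xm ^ card R \<le> xm ^ k"
    using k(1) xmin_pos xmin_le_1 by (simp add: power_decreasing)
  also have "\<dots> \<le> tab k c (q, 0)"
    using taboo_ge_xmin_power[OF k(2)] .
  also have "\<dots> \<le> (\<Sum>k\<le>card R. tab k c (q, 0))"
    using k(1) by (intro member_le_sum) (auto simp: taboo_nonneg)
  finally show ?thesis .
qed

lemma survival_card_R_le: "c \<in> R \<Longrightarrow> survival (card R) c \<le> 1 - xm ^ card R"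
  using xmin_power_le_hit survival_plus_hit_le_1[of "card R" c] by fastforce

lemma survival_le_power:
  assumes "c \<in> R"
  shows "survival n c \<le> (1 - xm ^ card R) ^ (n div card R)"
  using assms
proof (induction n arbitrary: c rule: less_induct)
  case (less n)
  show ?case
  proof (cases "n < card R")
    case True then show ?thesis using survival_le_1 by simp
  next
    case False
    have "card R > 0" using less.prems finite_R card_gt_0_iff by blast
    define n' where "n' = n - card R"
    then have n_eq: "n = card R + n'" and div_eq: "n div card R = Suc (n' div card R)"
      using False \<open>card R > 0\<close> by (simp_all add: le_div_geq)
    have "survival n c = (\<Sum>d\<in>R. tab (card R) c d * survival n' d)"
      using survival_add[OF less.prems] n_eq by simp
    also have "\<dots> \<le> (\<Sum>d\<in>R. tab (card R) c d * (1 - xm ^ card R) ^ (n' div card R))"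
    proof (intro sum_mono mult_left_mono taboo_nonneg)
      fix d assume "d \<in> R"
      moreover have "n' < n" using \<open>card R > 0\<close> n_eq by simp
      ultimately show "survival n' d \<le> (1 - xm ^ card R) ^ (n' div card R)" by (rule less.IH[rotated])
    qed
    also have "\<dots> = survival (card R) c * (1 - xm ^ card R) ^ (n' div card R)"
      by (simp add: survival_def sum_distrib_right)
    also have "\<dots> \<le> (1 - xm ^ card R) * (1 - xm ^ card R) ^ (n' div card R)"
      using survival_card_R_le[OF less.prems] survival_nonneg[of "card R" c]
      by (intro mult_right_mono zero_le_power) auto
    also have "\<dots> = (1 - xm ^ card R) ^ (n div card R)"
      using div_eq by simp
    finally show ?thesis .
  qed
qed

lemma sum_taboo_after_le_survival:
  "(\<Sum>k<K. tab (Suc (j + k)) (p, 1) (q, 0)) \<le> survival j (p, 1)"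
proof -
  have "(\<Sum>k<K. tab (Suc (j + k)) (p, 1) (q, 0))
      = (\<Sum>k<K. \<Sum>d\<in>R. tab j (p, 1) d * tab (Suc k) d (q, 0))"
    using taboo_add_through_R[of "(p, 1)" "(q, 0)" "Suc _" j] by simp
  also have "\<dots> = (\<Sum>d\<in>R. tab j (p, 1) d * (\<Sum>k<K. tab (Suc k) d (q, 0)))"
    by (subst sum.swap) (simp add: sum_distrib_left)
  also have "\<dots> \<le> (\<Sum>d\<in>R. tab j (p, 1) d)"
  proof (intro sum_mono mult_right_le_one_le taboo_nonneg sum_nonneg)
    fix d
    have "(\<Sum>k<K. tab (Suc k) d (q, 0)) \<le> (\<Sum>k<Suc K. tab k d (q, 0))"
      by (simp add: sum.lessThan_Suc_shift del: sum.lessThan_Suc)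
    also have "\<dots> \<le> 1"
      using taboo_substochastic[of "{}" "(q, 0)" K d] by (simp add: lessThan_Suc_atMost)
    finally show "(\<Sum>k<K. tab (Suc k) d (q, 0)) \<le> 1" .
  qed
  finally show ?thesis by (simp add: survival_def)
qed

lemma start_in_R:
  assumes "pdown P0 Pp p q > 0"
  shows "(p, 1) \<in> R"
proof -
  obtain n where "tab n (p, 1) (q, 0) \<noteq> 0"
    using assms by (force simp: pdown_def)
  then have "((p, 1), (q, 0)) \<in> P\<^sup>*"
    by (blast dest: taboo_nonzero_imp_relpow relpow_imp_rtrancl)
  then show ?thesis by (simp add: R_def)
qed

lemma summable_taboo_start: "summable (\<lambda>n. tab n (p, 1) (q, 0))"
proof (rule summableI_nonneg_bounded[OF taboo_nonneg])
  fix N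
  have "(\<Sum>k<N. tab k (p, 1) (q, 0)) \<le> (\<Sum>k\<le>N. tab k (p, 1) (q, 0))"
    by (intro sum_mono2) (auto simp: taboo_nonneg)
  also have "\<dots> \<le> 1"
    using taboo_substochastic[of "{}" "(q, 0)" N "(p, 1)"] by simp
  finally show "(\<Sum>k<N. tab k (p, 1) (q, 0)) \<le> 1" .
qed

lemma xmin_power_le_pdown:
  assumes "(p, 1) \<in> R"
  shows "xm ^ card R \<le> pdown P0 Pp p q"
  using xmin_power_le_hit[OF assms] sum_le_suminf[OF summable_taboo_start, of "{..card R}"]
  by (simp add: pdown_def taboo_nonneg)

lemma sum_weighted_taboo_le:
  assumes "(p, 1) \<in> R"
  shows "(\<Sum>n<N. real n * tab n (p, 1) (q, 0)) \<le> card R / xm ^ card R"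
proof -
  have "card R > 0" using assms finite_R card_gt_0_iff by blast
  have "0 < xm ^ card R" "xm ^ card R \<le> 1"
    using xmin_pos xmin_le_1 by (simp_all add: power_le_one)
  have "(\<Sum>n<N. real n * tab n (p, 1) (q, 0)) = (\<Sum>j<N. \<Sum>k<N - Suc j. tab (Suc (j + k)) (p, 1) (q, 0))"
    by (rule sum_of_nat_mult_eq_sum_tails)
  also have "\<dots> \<le> (\<Sum>j<N. survival j (p, 1))"
    by (intro sum_mono sum_taboo_after_le_survival)
  also have "\<dots> \<le> (\<Sum>j<N. (1 - xm ^ card R) ^ (j div card R))"
    by (intro sum_mono survival_le_power assms)
  also have "\<dots> \<le> card R / (1 - (1 - xm ^ card R))"
    using \<open>card R > 0\<close> \<open>0 < xm ^ card R\<close> \<open>xm ^ card R \<le> 1\<close> by (intro sum_power_div_le) simp_all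
  finally show ?thesis by simp
qed

lemma expected_time_bound:
  assumes "pdown P0 Pp p q > 0"
  shows "summable (\<lambda>n. real n * tab n (p, 1) (q, 0)) \<and> Edown P0 Pp p q \<le> card R / xm ^ (2 * card R)"
proof -
  have start: "(p, 1) \<in> R" using start_in_R[OF assms] .
  have summable: "summable (\<lambda>n. real n * tab n (p, 1) (q, 0))"
    by (rule summableI_nonneg_bounded[OF _ sum_weighted_taboo_le[OF start]]) (simp add: taboo_nonneg)
  have "(\<Sum>n. real n * tab n (p, 1) (q, 0)) \<le> card R / xm ^ card R"
    by (rule suminf_le_const[OF summable sum_weighted_taboo_le[OF start]])
  then have "Edown P0 Pp p q \<le> (card R / xm ^ card R) / xm ^ card R"
    unfolding Edown_def using xmin_pos xmin_power_le_pdown[OF start]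
    by (intro frac_le) simp_all
  then show ?thesis using summable by (simp add: power_mult power2_eq_square power_mult_distrib)
qed

end

lemma div_power_le_of_le_cube:
  fixes x :: real
  assumes "0 < x" "x \<le> 1" "m \<le> n ^ 3"
  shows "m / x ^ (2 * m) \<le> 15 * real n ^ 3 / x ^ (4 * n ^ 3)"
proof -
  have "m / x ^ (2 * m) \<le> real n ^ 3 / x ^ (4 * n ^ 3)"
    using assms by (intro frac_le power_decreasing) (auto simp flip: of_nat_power)
  also have "\<dots> \<le> 15 * real n ^ 3 / x ^ (4 * n ^ 3)"
    using assms by (intro divide_right_mono) auto
  finally show ?thesis .
qed

theorem mainTheorem7:
  fixes P0 Pp :: "'q::finite \<Rightarrow> int \<Rightarrow> 'q \<Rightarrow> real" and p q :: 'q
  assumes "pOC P0 Pp"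
    and "pdown P0 Pp p q > 0"
    and "finite (Pre_star P0 Pp {(q, 0)} \<inter> Post_star P0 Pp {(p, 1)})"
  shows "summable (\<lambda>n. real n * taboo P0 Pp n (p, 1) (q, 0)) \<and>
         Edown P0 Pp p q \<le> 15 * real (card (UNIV :: 'q set)) ^ 3 / xmin P0 Pp ^ (4 * card (UNIV :: 'q set) ^ 3)"
proof -
  interpret poc_descent P0 Pp p q
    using assms(1,3) by unfold_locales
  show ?thesis
    using expected_time_bound[OF assms(2)] div_power_le_of_le_cube[OF xmin_pos xmin_le_1 card_R_le]
    by (meson order_trans)
qed

end
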